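(* If $\phi$ is a Young function and $f:\mathbb{R}^{N}\rightarrow [0,\infty ]$ is measurable, then $\|f\|_{\phi }\leq \|\hat{f}\|_{\phi }$.
   Context: A Young function is a nonconstant $\phi:[0,\infty]\to[0,\infty]$ with $\phi(0)=0$, nondecreasing, convex and left continuous; $\|h\|_{\phi}:=\inf\{r>0:\int_{\mathbb{R}^N}\phi(r^{-1}|h|)\le 1\}$ ($=\infty$ if no such $r$). Enclosing balls: for nonempty bounded $X\subset\mathbb{R}^N$, $\overline{B}_X$ is the unique closed ball of minimal diameter containing $X$; $\overline{B}_X:=\mathbb{R}^N$ if $X$ unbounded; $\overline{B}_\emptyset:=\{0\}$. For $f:\mathbb{R}^N\to[-\infty,\infty]$, $\rho^+_f(\xi)\in[0,\infty]$ is the radius of $\overline{B}_{\{f>\xi\}}$, $\gamma^+_f(t):=\inf\{\xi:\rho^+_f(\xi)\le t\}$ for $t\ge0$, and $\hat f(x):=\gamma^+_f(|x|)$ (a measurable function). *)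

theory Defs
  imports "HOL-Analysis.Analysis"
begin

definition young_function :: "(ennreal \<Rightarrow> ennreal) \<Rightarrow> bool" where
  "young_function \<phi> \<longleftrightarrow>
     (\<exists>s t. \<phi> s \<noteq> \<phi> t) \<and>
     \<phi> 0 = 0 \<and>
     mono \<phi> \<and>
     (\<forall>s t (l::real). 0 \<le> l \<and> l \<le> 1 \<longrightarrow>
        \<phi> (ennreal l * s + ennreal (1 - l) * t) \<le> ennreal l * \<phi> s + ennreal (1 - l) * \<phi> t) \<and>
     (\<forall>t. 0 < t \<longrightarrow> (\<phi> \<longlongrightarrow> \<phi> t) (at_left t))"

text \<open>Luxemburg norm; Inf of the empty set of ennreal is \<infinity>.\<close>
definition orlicz_norm :: "(ennreal \<Rightarrow> ennreal) \<Rightarrow> ('a::euclidean_space \<Rightarrow> ereal) \<Rightarrow> ennreal" where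
  "orlicz_norm \<phi> h = Inf (ennreal ` {r::real. 0 < r \<and>
      (\<integral>\<^sup>+ x. \<phi> (ennreal (1 / r) * e2ennreal \<bar>h x\<bar>) \<partial>lebesgue) \<le> 1})"

text \<open>Radius of the closed ball of minimal diameter containing X
  (the minimal radius is unique); \<infinity> for unbounded X, 0 for the empty set
  (whose enclosing ball is {0}).\<close>
definition encl_radius :: "'a::euclidean_space set \<Rightarrow> ereal" where
  "encl_radius X = (if X = {} then 0 else if bounded X then
      ereal (THE r. (\<exists>c. X \<subseteq> cball c r) \<and> (\<forall>c' r'. X \<subseteq> cball c' r' \<longrightarrow> r \<le> r'))
    else \<infinity>)"

definition rho_plus :: "('a::euclidean_space \<Rightarrow> ereal) \<Rightarrow> ereal \<Rightarrow> ereal" where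
  "rho_plus f \<xi> = encl_radius {x. f x > \<xi>}"

definition gamma_plus :: "('a::euclidean_space \<Rightarrow> ereal) \<Rightarrow> real \<Rightarrow> ereal" where
  "gamma_plus f t = Inf {\<xi>. rho_plus f \<xi> \<le> ereal t}"

definition hat :: "('a::euclidean_space \<Rightarrow> ereal) \<Rightarrow> 'a \<Rightarrow> ereal" where
  "hat f x = gamma_plus f (norm x)"

end

theory Submission
  imports Defs
begin

text \<open>By the layer-cake formula it suffices to compare, for each threshold, the measures of the
  superlevel sets of \<open>\<phi>(|f|/r)\<close> and \<open>\<phi>(|hat f|/r)\<close>. As \<open>\<phi>\<close> is nondecreasing and left
  continuous, these are superlevel sets \<open>{f > b}\<close> and \<open>{hat f > b}\<close> of \<open>f\<close> and \<open>hat f\<close>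
  themselves. Now \<open>{f > \<xi>'}\<close> lies in a closed ball of radius \<open>\<rho>\<^sup>+\<^sub>f(\<xi>')\<close>, whereas the open ball
  of that radius centred at the origin lies in \<open>{hat f > \<xi>}\<close> for every \<open>\<xi> < \<xi>'\<close>; letting \<open>\<xi>'\<close>
  decrease to \<open>\<xi>\<close> gives \<open>|{f > \<xi>}| \<le> |{hat f > \<xi>}|\<close>.\<close>

lemma sigma_finite_lebesgue: "sigma_finite_measure (lebesgue :: 'a::euclidean_space measure)"
proof
  obtain A :: "'a set set" where "countable A" "A \<subseteq> sets lborel" "\<Union> A = space lborel"
    "\<forall>a\<in>A. emeasure lborel a \<noteq> \<infinity>"
    using lborel.sigma_finite_countable by blast
  then show "\<exists>A::'a set set. countable A \<and> A \<subseteq> sets lebesgue \<and> \<Union> A = space lebesgue \<and>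
      (\<forall>a\<in>A. emeasure lebesgue a \<noteq> \<infinity>)"
    by (intro exI[of _ A]) (auto simp: subset_eq)
qed

lemma emeasure_lborel_atLeast [simp]: "emeasure lborel {a::real..} = \<infinity>"
proof -
  have "(SUP n. of_nat n :: ennreal) \<le> emeasure lborel {a..}"
  proof (rule SUP_least)
    fix n :: nat
    have "of_nat n = emeasure lborel {a..a + real n}"
      by (simp add: ennreal_of_nat_eq_real_of_nat)
    also have "\<dots> \<le> emeasure lborel {a..}"
      by (rule emeasure_mono) auto
    finally show "of_nat n \<le> emeasure lborel {a..}" .
  qed
  then show ?thesis
    by (simp add: ennreal_SUP_of_nat_eq_top top_unique)
qed

lemma emeasure_lborel_below_ennreal: "emeasure lborel {s::real. 0 \<le> s \<and> ennreal s < t} = t"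
proof (cases t)
  case (real q)
  then have "{s. 0 \<le> s \<and> ennreal s < t} = {0..<q}"
    by (auto simp: ennreal_less_iff)
  then show ?thesis using real by simp
next
  case top
  then have "{s. 0 \<le> s \<and> ennreal s < t} = {0..}" by auto
  then show ?thesis using top by simp
qed

context sigma_finite_measure
begin

lemma nn_integral_layer_cake:
  assumes [measurable]: "G \<in> borel_measurable M"
  shows "(\<integral>\<^sup>+ x. G x \<partial>M) = (\<integral>\<^sup>+ s\<in>{0::real..}. emeasure M {x \<in> space M. ennreal s < G x} \<partial>lborel)"
proof -
  interpret pair_sigma_finite M lborel ..
  let ?I = "\<lambda>x s. indicator {s::real. 0 \<le> s \<and> ennreal s < G x} s :: ennreal"
  have meas: "(\<lambda>(x, s). ?I x s) \<in> borel_measurable (M \<Otimes>\<^sub>M lborel)"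
    by measurable
  have "(\<integral>\<^sup>+ s. (\<integral>\<^sup>+ x. ?I x s \<partial>M) \<partial>lborel) = (\<integral>\<^sup>+ x. (\<integral>\<^sup>+ s. ?I x s \<partial>lborel) \<partial>M)"
    by (rule Fubini[OF meas, unfolded case_prod_conv])
  moreover have "(\<integral>\<^sup>+ s. ?I x s \<partial>lborel) = G x" for x
    by (simp add: emeasure_lborel_below_ennreal)
  moreover have "(\<integral>\<^sup>+ x. ?I x s \<partial>M) = indicator {0..} s * emeasure M {x \<in> space M. ennreal s < G x}" for s
  proof -
    have "(\<integral>\<^sup>+ x. ?I x s \<partial>M) =
        (\<integral>\<^sup>+ x. indicator {0..} s * indicator {x \<in> space M. ennreal s < G x} x \<partial>M)"
      by (rule nn_integral_cong) (auto simp: indicator_def)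
    also have "\<dots> = indicator {0..} s * emeasure M {x \<in> space M. ennreal s < G x}"
      by (rule nn_integral_cmult_indicator) measurable
    finally show ?thesis .
  qed
  ultimately show ?thesis
    by (simp add: mult.commute)
qed

lemma nn_integral_mono_superlevel:
  assumes "G \<in> borel_measurable M" "H \<in> borel_measurable M"
    and "\<And>s::real. 0 \<le> s \<Longrightarrow>
      emeasure M {x \<in> space M. ennreal s < G x} \<le> emeasure M {x \<in> space M. ennreal s < H x}"
  shows "(\<integral>\<^sup>+ x. G x \<partial>M) \<le> (\<integral>\<^sup>+ x. H x \<partial>M)"
  unfolding nn_integral_layer_cake[OF assms(1)] nn_integral_layer_cake[OF assms(2)]
  using assms(3) by (intro nn_integral_mono) (auto simp: indicator_def)

end

lemma superlevel_eq_greaterThan_left_continuous: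
  fixes \<phi> :: "ennreal \<Rightarrow> ennreal"
  assumes mono: "mono \<phi>" and "\<phi> 0 = 0"
    and left_cont: "\<And>t. 0 < t \<Longrightarrow> (\<phi> \<longlongrightarrow> \<phi> t) (at_left t)"
  obtains a where "\<And>t. s < \<phi> t \<longleftrightarrow> a < t"
proof
  define T where "T = {t. \<phi> t \<le> s}"
  fix t
  show "s < \<phi> t \<longleftrightarrow> Sup T < t"
  proof
    assume "s < \<phi> t"
    then have "t \<noteq> 0" using \<open>\<phi> 0 = 0\<close> by auto
    then have "0 < t" by (simp add: zero_less_iff_neq_zero)
    then have "eventually (\<lambda>z. s < \<phi> z) (at_left t)"
      using left_cont \<open>s < \<phi> t\<close> by (auto intro: order_tendstoD)
    then obtain b where "b < t" and b: "\<And>z. b < z \<Longrightarrow> z < t \<Longrightarrow> s < \<phi> z"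
      using \<open>0 < t\<close> by (auto simp: eventually_at_left[of 0 t])
    obtain z where "b < z" "z < t" using dense[OF \<open>b < t\<close>] by blast
    have "Sup T \<le> z"
    proof (rule Sup_least)
      fix y assume "y \<in> T"
      then have "\<phi> y < \<phi> z"
        using b[OF \<open>b < z\<close> \<open>z < t\<close>] by (simp add: T_def)
      then show "y \<le> z"
        using monoD[OF mono, of z y] by (meson leD le_cases)
    qed
    then show "Sup T < t" using \<open>z < t\<close> by simp
  next
    assume "Sup T < t"
    then have "t \<notin> T" using Sup_upper not_le by blast
    then show "s < \<phi> t" by (simp add: T_def)
  qed
qed

lemma young_function_superlevel:
  assumes "young_function \<phi>"
  obtains a where "\<And>t. s < \<phi> t \<longleftrightarrow> a < t"
  using assms superlevel_eq_greaterThan_left_continuous[of \<phi> s]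
  by (auto simp: young_function_def)

lemma borel_measurable_young_function:
  assumes "young_function \<phi>"
  shows "\<phi> \<in> borel_measurable borel"
proof (rule borel_measurableI_greater)
  fix s
  obtain a where "\<And>t. s < \<phi> t \<longleftrightarrow> a < t"
    using young_function_superlevel[OF assms] by blast
  then have "{t \<in> space borel. s < \<phi> t} = {a<..}" by auto
  then show "{t \<in> space borel. s < \<phi> t} \<in> sets borel" by simp
qed

lemma less_mult_e2ennreal_iff:
  fixes v :: ereal and r :: real
  assumes "0 < r" "0 \<le> v"
  shows "a < ennreal (1 / r) * e2ennreal v \<longleftrightarrow> enn2ereal (a * ennreal r) < v"
proof -
  define c where "c = ennreal (1 / r)"
  have "c * ennreal r = 1"
    using assms(1) by (simp add: c_def ennreal_mult[symmetric])
  then have "a = c * (a * ennreal r)"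
    by (simp add: mult.left_commute mult.commute)
  moreover have "c \<noteq> 0" "c \<noteq> top"
    using assms(1) by (auto simp: c_def)
  ultimately have "a < c * e2ennreal v \<longleftrightarrow> a * ennreal r < e2ennreal v"
    by (metis ennreal_mult_le_mult_iff not_le)
  then have "a < ennreal (1 / r) * e2ennreal v \<longleftrightarrow> a * ennreal r < e2ennreal v"
    by (simp add: c_def)
  also have "\<dots> \<longleftrightarrow> enn2ereal (a * ennreal r) < v"
    using assms(2) by (simp add: less_ennreal.rep_eq enn2ereal_e2ennreal)
  finally show ?thesis .
qed

lemma compact_enclosing_centres:
  fixes X :: "'a::heine_borel set"
  assumes "X \<noteq> {}"
  shows "compact {c. X \<subseteq> cball c r}"
proof -
  obtain x0 where "x0 \<in> X" using assms by auto
  have "{c. X \<subseteq> cball c r} = (\<Inter>x\<in>X. cball x r)"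
    by (auto simp: dist_commute)
  moreover have "(\<Inter>x\<in>X. cball x r) \<subseteq> cball x0 r"
    using \<open>x0 \<in> X\<close> by auto
  ultimately show ?thesis
    by (metis bounded_cball bounded_subset closed_INT closed_cball compact_eq_bounded_closed)
qed

lemma exists_minimal_enclosing_cball:
  fixes X :: "'a::heine_borel set"
  assumes "X \<noteq> {}" "bounded X"
  obtains c r where "X \<subseteq> cball c r" "\<And>c' r'. X \<subseteq> cball c' r' \<Longrightarrow> r \<le> r'"
proof -
  define S where "S = {r. \<exists>c. X \<subseteq> cball c r}"
  have "S \<noteq> {}" using assms(2) by (auto simp: S_def bounded_subset_cball)
  have "bdd_below S"
    using assms(1) by (intro bdd_belowI[of _ 0]) (auto simp: S_def cball_eq_empty[symmetric])
  define R where "R = Inf S"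
  define K where "K n = {c. X \<subseteq> cball c (R + 1 / real (Suc n))}" for n
  have "compact (K n)" for n
    unfolding K_def using assms(1) by (rule compact_enclosing_centres)
  moreover have "K n \<noteq> {}" for n
  proof -
    obtain r where "r \<in> S" "r < R + 1 / real (Suc n)"
      using cInf_less_iff[OF \<open>S \<noteq> {}\<close> \<open>bdd_below S\<close>, of "R + 1 / real (Suc n)"]
      by (auto simp: R_def)
    then obtain c where "X \<subseteq> cball c r"
      by (auto simp: S_def)
    then have "c \<in> K n"
      using subset_cball[of r "R + 1 / real (Suc n)" c] \<open>r < _\<close> by (auto simp: K_def)
    then show ?thesis by auto
  qed
  moreover have "K n \<subseteq> K m" if "m \<le> n" for m n
  proof -
    have "1 / real (Suc n) \<le> 1 / real (Suc m)" using that by (simp add: frac_le)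
    then show ?thesis by (force simp: K_def)
  qed
  ultimately have "\<Inter> (range K) \<noteq> {}"
    by (rule compact_nest)
  then obtain c where c: "\<And>n. c \<in> K n"
    by auto
  have "X \<subseteq> cball c R"
  proof
    fix x assume "x \<in> X"
    then have "dist c x \<le> R + 1 / real (Suc n)" for n
      using c[of n] by (auto simp: K_def)
    then show "x \<in> cball c R"
      using LIMSEQ_le_const[OF LIMSEQ_inverse_real_of_nat_add[of R], of "dist c x"]
      by (simp add: inverse_eq_divide)
  qed
  moreover have "R \<le> r'" if "X \<subseteq> cball c' r'" for c' r'
    using that \<open>bdd_below S\<close> by (auto simp: R_def S_def intro!: cInf_lower)
  ultimately show ?thesis using that by blast
qed

lemma encl_radius_eq:
  fixes X :: "'a::euclidean_space set"
  assumes "X \<noteq> {}" "bounded X"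
  obtains c r where "encl_radius X = ereal r" "0 \<le> r" "X \<subseteq> cball c r"
    "\<And>c' r'. X \<subseteq> cball c' r' \<Longrightarrow> r \<le> r'"
proof -
  obtain c r where c: "X \<subseteq> cball c r" and r: "\<And>c' r'. X \<subseteq> cball c' r' \<Longrightarrow> r \<le> r'"
    using exists_minimal_enclosing_cball[OF assms] by blast
  have "(THE r. (\<exists>c. X \<subseteq> cball c r) \<and> (\<forall>c' r'. X \<subseteq> cball c' r' \<longrightarrow> r \<le> r')) = r"
    using c r by (intro the_equality) (auto intro: order_antisym)
  then have "encl_radius X = ereal r"
    using assms by (simp add: encl_radius_def)
  moreover have "0 \<le> r"
    using assms(1) c by (auto simp: cball_eq_empty[symmetric])
  ultimately show ?thesis using that c r by blast
qed

lemma encl_radius_nonneg: "0 \<le> encl_radius X"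
proof (cases "X = {} \<or> \<not> bounded X")
  case False
  then obtain r where "encl_radius X = ereal r" "0 \<le> r"
    by (meson encl_radius_eq)
  then show ?thesis by simp
qed (auto simp: encl_radius_def)

lemma encl_radius_mono:
  assumes "X \<subseteq> Y"
  shows "encl_radius X \<le> encl_radius Y"
proof (cases "X = {} \<or> \<not> bounded Y")
  case True
  then have "encl_radius X = 0 \<or> encl_radius Y = \<infinity>"
    using assms by (auto simp: encl_radius_def)
  then show ?thesis
    using encl_radius_nonneg[of Y] by auto
next
  case False
  then have "X \<noteq> {}" "Y \<noteq> {}" "bounded X" "bounded Y"
    using assms bounded_subset by auto
  obtain rX where X: "encl_radius X = ereal rX" "\<And>c' r'. X \<subseteq> cball c' r' \<Longrightarrow> rX \<le> r'"
    using encl_radius_eq[OF \<open>X \<noteq> {}\<close> \<open>bounded X\<close>] by metis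
  obtain cY rY where Y: "encl_radius Y = ereal rY" "Y \<subseteq> cball cY rY"
    using encl_radius_eq[OF \<open>Y \<noteq> {}\<close> \<open>bounded Y\<close>] by metis
  have "rX \<le> rY"
    using X(2) Y(2) assms by blast
  then show ?thesis using X(1) Y(1) by simp
qed

lemma emeasure_le_encl_radius_ball:
  fixes X :: "'a::euclidean_space set"
  assumes "X \<in> sets lebesgue"
  shows "emeasure lebesgue X \<le> emeasure lebesgue {x::'a. ereal (norm x) < encl_radius X}"
proof (cases "X = {} \<or> \<not> bounded X")
  case True
  then consider "X = {}" | "encl_radius X = \<infinity>"
    by (cases "X = {}") (auto simp: encl_radius_def)
  then show ?thesis
  proof cases
    case 2
    then have "{x::'a. ereal (norm x) < encl_radius X} = UNIV" by simp
    then show ?thesis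
      using assms by (simp add: emeasure_mono)
  qed simp
next
  case False
  then obtain c r where r: "encl_radius X = ereal r" "0 \<le> r" "X \<subseteq> cball c r"
    by (meson encl_radius_eq)
  have "emeasure lebesgue X \<le> emeasure lebesgue (cball c r)"
    using r(3) by (rule emeasure_mono) simp
  also have "\<dots> = emeasure lborel (cball c r)"
    by simp
  also have "\<dots> = emeasure lborel (ball (0::'a) r)"
    using r(2) by (simp add: emeasure_cball emeasure_ball)
  also have "\<dots> = emeasure lebesgue (ball (0::'a) r)"
    by simp
  also have "ball (0::'a) r = {x::'a. ereal (norm x) < encl_radius X}"
    using r(1) by auto
  finally show ?thesis .
qed

lemma rho_plus_antimono: "\<xi> \<le> \<xi>' \<Longrightarrow> rho_plus f \<xi>' \<le> rho_plus f \<xi>"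
  unfolding rho_plus_def by (rule encl_radius_mono) auto

lemma le_gamma_plus:
  assumes "ereal t < rho_plus f \<xi>"
  shows "\<xi> \<le> gamma_plus f t"
  unfolding gamma_plus_def
proof (rule Inf_greatest)
  fix \<eta> assume "\<eta> \<in> {\<eta>. rho_plus f \<eta> \<le> ereal t}"
  show "\<xi> \<le> \<eta>"
  proof (rule ccontr)
    assume "\<not> \<xi> \<le> \<eta>"
    then have "rho_plus f \<xi> \<le> rho_plus f \<eta>"
      by (intro rho_plus_antimono) simp
    with \<open>\<eta> \<in> _\<close> assms show False
      by simp
  qed
qed

lemma gamma_plus_antimono: "t \<le> t' \<Longrightarrow> gamma_plus f t' \<le> gamma_plus f t"
  unfolding gamma_plus_def by (rule Inf_superset_mono) (auto intro: order.trans[of _ "ereal t"])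

lemma hat_nonneg:
  assumes "\<And>x. 0 \<le> f x"
  shows "0 \<le> hat f x"
proof -
  have rho_neg: "rho_plus f \<xi> = \<infinity>" if "\<xi> < 0" for \<xi>
  proof -
    have "\<xi> < f y" for y
      using that assms by (rule less_le_trans)
    then show ?thesis
      by (simp add: rho_plus_def encl_radius_def)
  qed
  show ?thesis
    unfolding hat_def gamma_plus_def
  proof (rule Inf_greatest)
    fix \<xi> assume "\<xi> \<in> {\<xi>. rho_plus f \<xi> \<le> ereal (norm x)}"
    then have "rho_plus f \<xi> \<noteq> \<infinity>" by auto
    then show "0 \<le> \<xi>"
      using rho_neg not_le by blast
  qed
qed

lemma sets_borel_downward_closed:
  fixes D :: "real set"
  assumes "\<And>s t. s \<le> t \<Longrightarrow> t \<in> D \<Longrightarrow> s \<in> D"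
  shows "D \<in> sets borel"
proof -
  have "mono (\<lambda>t. - indicator D t :: real)"
    using assms by (auto simp: mono_def indicator_def)
  then have "(\<lambda>t. - indicator D t :: real) \<in> borel_measurable borel"
    by (rule borel_measurable_mono)
  then have "{t. - indicator D t < (0::real)} \<in> sets borel"
    by measurable
  then show ?thesis
    by (simp add: indicator_def)
qed

lemma borel_measurable_hat: "hat f \<in> borel_measurable borel"
proof (rule borel_measurableI_greater)
  fix \<xi>
  have "{t. \<xi> < gamma_plus f t} \<in> sets borel"
    by (rule sets_borel_downward_closed) (auto intro: less_le_trans gamma_plus_antimono)
  then have "norm -` {t. \<xi> < gamma_plus f t} \<in> sets borel"
    by (rule measurable_sets_borel[OF borel_measurable_norm])
  then show "{x \<in> space borel. \<xi> < hat f x} \<in> sets borel"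
    by (simp add: hat_def vimage_def)
qed

lemma lebesgue_measurable_hat [measurable]: "hat f \<in> borel_measurable lebesgue"
proof -
  have "hat f \<in> borel_measurable lborel"
    using borel_measurable_hat by simp
  then show ?thesis
    by (rule measurable_completion)
qed

lemma emeasure_superlevel_le_hat_strict:
  fixes f :: "'a::euclidean_space \<Rightarrow> ereal"
  assumes "f \<in> borel_measurable lebesgue" "\<xi> < \<xi>'"
  shows "emeasure lebesgue {x. \<xi>' < f x} \<le> emeasure lebesgue {x. \<xi> < hat f x}"
proof -
  have "{x \<in> space lebesgue. \<xi>' < f x} \<in> sets lebesgue"
    using assms(1) by measurable
  then have "emeasure lebesgue {x. \<xi>' < f x}
      \<le> emeasure lebesgue {x::'a. ereal (norm x) < rho_plus f \<xi>'}"
    unfolding rho_plus_def by (intro emeasure_le_encl_radius_ball) simp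
  also have "\<dots> \<le> emeasure lebesgue {x. \<xi> < hat f x}"
  proof (rule emeasure_mono)
    show "{x::'a. ereal (norm x) < rho_plus f \<xi>'} \<subseteq> {x. \<xi> < hat f x}"
      using assms(2) le_gamma_plus by (fastforce simp: hat_def)
    have "{x \<in> space lebesgue. \<xi> < hat f x} \<in> sets lebesgue"
      by measurable
    then show "{x. \<xi> < hat f x} \<in> sets lebesgue"
      by simp
  qed
  finally show ?thesis .
qed

lemma emeasure_superlevel_le_hat:
  fixes f :: "'a::euclidean_space \<Rightarrow> ereal"
  assumes [measurable]: "f \<in> borel_measurable lebesgue"
  shows "emeasure lebesgue {x. \<xi> < f x} \<le> emeasure lebesgue {x. \<xi> < hat f x}"
proof (cases "\<xi> = \<infinity>")
  case False
  then obtain q :: "nat \<Rightarrow> real" where "decseq q" "\<And>i. \<xi> < q i" "q \<longlonglongrightarrow> \<xi>"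
    using ereal_decseq_approx[of \<xi> \<infinity>] by (auto simp: less_top)
  define A where "A i = {x. ereal (q i) < f x}" for i
  have union: "{x. \<xi> < f x} = (\<Union>i. A i)"
  proof (intro set_eqI iffI)
    fix x assume "x \<in> {x. \<xi> < f x}"
    then have "eventually (\<lambda>i. ereal (q i) < f x) sequentially"
      using \<open>q \<longlonglongrightarrow> \<xi>\<close> by (auto intro: order_tendstoD)
    then show "x \<in> (\<Union>i. A i)"
      by (auto simp: A_def eventually_sequentially)
  qed (use \<open>\<And>i. \<xi> < q i\<close> in \<open>auto simp: A_def intro: less_trans\<close>)
  have "range A \<subseteq> sets lebesgue"
  proof -
    have "{x \<in> space lebesgue. ereal (q i) < f x} \<in> sets lebesgue" for i
      by measurable
    then show ?thesis by (auto simp: A_def)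
  qed
  moreover have "incseq A"
    using \<open>decseq q\<close> by (auto simp: A_def incseq_def decseq_def) (meson ereal_less_eq(3) le_less_trans)
  ultimately have "emeasure lebesgue {x. \<xi> < f x} = (SUP i. emeasure lebesgue (A i))"
    unfolding union by (rule SUP_emeasure_incseq[symmetric])
  also have "\<dots> \<le> emeasure lebesgue {x. \<xi> < hat f x}"
    using emeasure_superlevel_le_hat_strict[OF assms \<open>\<xi> < q _\<close>]
    by (auto simp: A_def intro: SUP_least)
  finally show ?thesis .
qed simp

lemma nn_integral_young_le_hat:
  fixes f :: "'a::euclidean_space \<Rightarrow> ereal"
  assumes "young_function \<phi>" and [measurable]: "f \<in> borel_measurable lebesgue"
    and "\<And>x. 0 \<le> f x" and "0 < r"
  shows "(\<integral>\<^sup>+ x. \<phi> (ennreal (1 / r) * e2ennreal \<bar>f x\<bar>) \<partial>lebesgue)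
    \<le> (\<integral>\<^sup>+ x. \<phi> (ennreal (1 / r) * e2ennreal \<bar>hat f x\<bar>) \<partial>lebesgue)"
proof (rule sigma_finite_measure.nn_integral_mono_superlevel[OF sigma_finite_lebesgue])
  note [measurable] = borel_measurable_young_function[OF assms(1)]
  show "(\<lambda>x. \<phi> (ennreal (1 / r) * e2ennreal \<bar>f x\<bar>)) \<in> borel_measurable lebesgue"
    "(\<lambda>x. \<phi> (ennreal (1 / r) * e2ennreal \<bar>hat f x\<bar>)) \<in> borel_measurable lebesgue"
    by measurable
  fix s :: real
  obtain a where a: "\<And>t. ennreal s < \<phi> t \<longleftrightarrow> a < t"
    using young_function_superlevel[OF assms(1)] by blast
  have superlevel: "{x \<in> space lebesgue. ennreal s < \<phi> (ennreal (1 / r) * e2ennreal \<bar>h x\<bar>)}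
      = {x. enn2ereal (a * ennreal r) < h x}" if "\<And>x. 0 \<le> h x" for h :: "'a \<Rightarrow> ereal"
    using that by (simp add: a less_mult_e2ennreal_iff[OF \<open>0 < r\<close>])
  show "emeasure lebesgue {x \<in> space lebesgue. ennreal s < \<phi> (ennreal (1 / r) * e2ennreal \<bar>f x\<bar>)}
      \<le> emeasure lebesgue {x \<in> space lebesgue. ennreal s < \<phi> (ennreal (1 / r) * e2ennreal \<bar>hat f x\<bar>)}"
    unfolding superlevel[of f, OF assms(3)] superlevel[of "hat f", OF hat_nonneg[OF assms(3)]]
    by (rule emeasure_superlevel_le_hat) measurable
qed

theorem lemma17:
  fixes \<phi> :: "ennreal \<Rightarrow> ennreal" and f :: "'a::euclidean_space \<Rightarrow> ereal"
  assumes "young_function \<phi>"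
    and "f \<in> borel_measurable lebesgue"
    and "\<forall>x. 0 \<le> f x"
  shows "orlicz_norm \<phi> f \<le> orlicz_norm \<phi> (hat f)"
  unfolding orlicz_norm_def
proof (intro Inf_superset_mono image_mono subsetI)
  fix r assume "r \<in> {r. 0 < r \<and> (\<integral>\<^sup>+ x. \<phi> (ennreal (1 / r) * e2ennreal \<bar>hat f x\<bar>) \<partial>lebesgue) \<le> 1}"
  with nn_integral_young_le_hat[OF assms(1,2)] assms(3)
  show "r \<in> {r. 0 < r \<and> (\<integral>\<^sup>+ x. \<phi> (ennreal (1 / r) * e2ennreal \<bar>f x\<bar>) \<partial>lebesgue) \<le> 1}"
    by (auto intro: order_trans)
qed

end
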